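(* Let $(A,\leq,\cdot,/)$ be a right-residuated magma satisfying condition (N). For $a\in A$ let $(a]=\{x\in A\mid x\leq a\}$. Then: (1) each $(a]$ is closed under $\sqcap$; (2) the following are equivalent: (a) $A$ is a narhoop; (b) for every $a\in A$, $\sqcap$ is commutative on $(a]$; (c) for every $a\in A$, $\sqcap$ is associative on $(a]$.
   Context: Write $xy$ for $x\cdot y$; $\cdot$ binds more strongly than $/$, and $/$ binds more strongly than $\sqcap$, where $x\sqcap y := (x/y)y$. A right-residuated magma is a structure $(A,\leq,\cdot,/)$ where $(A,\leq)$ is a poset and $xy\leq z\iff x\leq z/y$ for all $x,y,z\in A$. Condition (N): for all $x,y\in A$, $x\leq y\iff x = y\sqcap x$. A narhoop is a right-residuated magma such that for all $x,y$: $x\leq y\iff x\sqcap y = x = y\sqcap x$; equivalently, a right-residuated magma satisfying (N) and the identity $(x\sqcap y)\sqcap x = x\sqcap y$. *)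

theory Defs
  imports Main
begin

text \<open>A right-residuated magma on a poset (type 'a with partial order),
 with multiplication m and right residual r (r x y stands for x / y).\<close>

definition right_residuated_magma :: "('a::order \<Rightarrow> 'a \<Rightarrow> 'a) \<Rightarrow> ('a \<Rightarrow> 'a \<Rightarrow> 'a) \<Rightarrow> bool" where
  "right_residuated_magma m r \<longleftrightarrow> (\<forall>x y z. m x y \<le> z \<longleftrightarrow> x \<le> r z y)"

definition meetop :: "('a \<Rightarrow> 'a \<Rightarrow> 'a) \<Rightarrow> ('a \<Rightarrow> 'a \<Rightarrow> 'a) \<Rightarrow> 'a \<Rightarrow> 'a \<Rightarrow> 'a" where
  "meetop m r x y = m (r x y) y"

definition condN :: "('a::order \<Rightarrow> 'a \<Rightarrow> 'a) \<Rightarrow> ('a \<Rightarrow> 'a \<Rightarrow> 'a) \<Rightarrow> bool" where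
  "condN m r \<longleftrightarrow> (\<forall>x y. x \<le> y \<longleftrightarrow> x = meetop m r y x)"

definition narhoop :: "('a::order \<Rightarrow> 'a \<Rightarrow> 'a) \<Rightarrow> ('a \<Rightarrow> 'a \<Rightarrow> 'a) \<Rightarrow> bool" where
  "narhoop m r \<longleftrightarrow> right_residuated_magma m r \<and>
     (\<forall>x y. x \<le> y \<longleftrightarrow> (meetop m r x y = x \<and> x = meetop m r y x))"

end

theory Submission
  imports Defs
begin

text \<open>Monotonicity of the residuation makes \<open>\<sqinter>\<close> monotone in its first argument and
  \<open>x \<sqinter> y \<le> x\<close>, while (N) gives \<open>a \<sqinter> y = y\<close> for \<open>y \<le> a\<close>. In a narhoop also \<open>w \<sqinter> y = w\<close>
  for \<open>w \<le> y\<close>, so for \<open>x, y \<le> a\<close> one gets \<open>x \<sqinter> y \<le> a \<sqinter> y = y\<close> and, for any common lower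
  bound \<open>w\<close>, \<open>w = w \<sqinter> y \<le> x \<sqinter> y\<close>: on \<open>(a]\<close> the operation \<open>\<sqinter>\<close> is the meet, hence commutative
  and associative. Conversely, for \<open>x \<le> y\<close> commutativity on \<open>(y]\<close> gives \<open>x \<sqinter> y = y \<sqinter> x = x\<close>,
  and associativity gives \<open>x = x \<sqinter> (y \<sqinter> x) = (x \<sqinter> y) \<sqinter> x \<le> x \<sqinter> y \<le> x\<close>.\<close>

locale rr_magma =
  fixes m r :: "'a::order \<Rightarrow> 'a \<Rightarrow> 'a"
  assumes rr_magma: "right_residuated_magma m r"
begin

abbreviation meet :: "'a \<Rightarrow> 'a \<Rightarrow> 'a"  (infixl \<open>\<sqinter>\<^sub>r\<close> 70)
  where "x \<sqinter>\<^sub>r y \<equiv> meetop m r x y"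

lemma residuation: "m x y \<le> z \<longleftrightarrow> x \<le> r z y"
  using rr_magma unfolding right_residuated_magma_def by blast

lemma mult_mono_left: "x \<le> x' \<Longrightarrow> m x y \<le> m x' y"
  using residuation order_trans by blast

lemma resid_mono_left: "x \<le> x' \<Longrightarrow> r x y \<le> r x' y"
  using residuation order_trans by blast

lemma meetop_le_left: "x \<sqinter>\<^sub>r y \<le> x"
  unfolding meetop_def using residuation by blast

lemma meetop_mono_left: "x \<le> x' \<Longrightarrow> x \<sqinter>\<^sub>r y \<le> x' \<sqinter>\<^sub>r y"
  unfolding meetop_def by (intro mult_mono_left resid_mono_left)

lemma meetop_le_if_le_left: "x \<le> a \<Longrightarrow> x \<sqinter>\<^sub>r y \<le> a"
  using meetop_le_left order_trans by blast

end

locale rr_magma_N = rr_magma +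
  assumes condN: "condN m r"
begin

lemma le_iff_meetop_eq: "x \<le> y \<longleftrightarrow> y \<sqinter>\<^sub>r x = x"
  using condN unfolding condN_def by metis

lemma meetop_idem: "x \<sqinter>\<^sub>r x = x"
  using le_iff_meetop_eq by blast

lemma narhoop_iff: "narhoop m r \<longleftrightarrow> (\<forall>x y. x \<le> y \<longrightarrow> x \<sqinter>\<^sub>r y = x)"
  unfolding narhoop_def using rr_magma le_iff_meetop_eq by metis

context
  assumes narhoop: "narhoop m r"
begin

lemma meetop_eq_left_if_le: "x \<le> y \<Longrightarrow> x \<sqinter>\<^sub>r y = x"
  using narhoop narhoop_iff by blast

lemma meetop_le_right:
  assumes "x \<le> a" "y \<le> a"
  shows "x \<sqinter>\<^sub>r y \<le> y"
proof -
  have "x \<sqinter>\<^sub>r y \<le> a \<sqinter>\<^sub>r y" using \<open>x \<le> a\<close> by (rule meetop_mono_left)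
  also have "\<dots> = y" using \<open>y \<le> a\<close> le_iff_meetop_eq by blast
  finally show ?thesis .
qed

lemma le_meetop_iff:
  assumes "x \<le> a" "y \<le> a"
  shows "w \<le> x \<sqinter>\<^sub>r y \<longleftrightarrow> w \<le> x \<and> w \<le> y"
proof
  assume "w \<le> x \<sqinter>\<^sub>r y"
  then show "w \<le> x \<and> w \<le> y"
    using meetop_le_left meetop_le_right[OF assms] order_trans by blast
next
  assume w: "w \<le> x \<and> w \<le> y"
  then have "w = w \<sqinter>\<^sub>r y" by (simp add: meetop_eq_left_if_le)
  also have "\<dots> \<le> x \<sqinter>\<^sub>r y" using w by (simp add: meetop_mono_left)
  finally show "w \<le> x \<sqinter>\<^sub>r y" .
qed

lemma meetop_commute_on_downset:
  assumes "x \<le> a" "y \<le> a"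
  shows "x \<sqinter>\<^sub>r y = y \<sqinter>\<^sub>r x"
  using le_meetop_iff[OF assms] le_meetop_iff[OF assms(2,1)] by (blast intro: antisym)

lemma meetop_assoc_on_downset:
  assumes "x \<le> a" "y \<le> a" "z \<le> a"
  shows "(x \<sqinter>\<^sub>r y) \<sqinter>\<^sub>r z = x \<sqinter>\<^sub>r (y \<sqinter>\<^sub>r z)"
proof -
  have "w \<le> (x \<sqinter>\<^sub>r y) \<sqinter>\<^sub>r z \<longleftrightarrow> w \<le> x \<sqinter>\<^sub>r (y \<sqinter>\<^sub>r z)" for w
    by (simp add: assms meetop_le_if_le_left le_meetop_iff[of _ a])
  then show ?thesis by (blast intro: antisym)
qed

end

lemma narhoop_if_commute_on_downsets:
  assumes "\<And>a x y. x \<le> a \<Longrightarrow> y \<le> a \<Longrightarrow> x \<sqinter>\<^sub>r y = y \<sqinter>\<^sub>r x"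
  shows "narhoop m r"
  unfolding narhoop_iff using assms le_iff_meetop_eq by (metis order_refl)

lemma narhoop_if_assoc_on_downsets:
  assumes assoc: "\<And>a x y z. x \<le> a \<Longrightarrow> y \<le> a \<Longrightarrow> z \<le> a \<Longrightarrow>
    (x \<sqinter>\<^sub>r y) \<sqinter>\<^sub>r z = x \<sqinter>\<^sub>r (y \<sqinter>\<^sub>r z)"
  shows "narhoop m r"
  unfolding narhoop_iff
proof (intro allI impI)
  fix x y :: 'a
  assume "x \<le> y"
  have "x = x \<sqinter>\<^sub>r (y \<sqinter>\<^sub>r x)"
    using \<open>x \<le> y\<close> le_iff_meetop_eq meetop_idem by simp
  also have "\<dots> = (x \<sqinter>\<^sub>r y) \<sqinter>\<^sub>r x"
    using assoc[of x y y x] \<open>x \<le> y\<close> by simp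
  also have "\<dots> \<le> x \<sqinter>\<^sub>r y" by (rule meetop_le_left)
  finally show "x \<sqinter>\<^sub>r y = x"
    using meetop_le_left antisym by blast
qed

end

theorem mainTheorem5:
  fixes m r :: "'a::order \<Rightarrow> 'a \<Rightarrow> 'a"
  assumes "right_residuated_magma m r" and "condN m r"
  shows "(\<forall>a. \<forall>x\<in>{..a}. \<forall>y\<in>{..a}. meetop m r x y \<in> {..a})
    \<and> (narhoop m r \<longleftrightarrow> (\<forall>a. \<forall>x\<in>{..a}. \<forall>y\<in>{..a}. meetop m r x y = meetop m r y x))
    \<and> ((\<forall>a. \<forall>x\<in>{..a}. \<forall>y\<in>{..a}. meetop m r x y = meetop m r y x) \<longleftrightarrow>
       (\<forall>a. \<forall>x\<in>{..a}. \<forall>y\<in>{..a}. \<forall>z\<in>{..a}. meetop m r (meetop m r x y) z = meetop m r x (meetop m r y z)))"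
proof -
  interpret rr_magma_N m r
    using assms by unfold_locales
  have commute: "narhoop m r \<longleftrightarrow> (\<forall>a. \<forall>x\<in>{..a}. \<forall>y\<in>{..a}. x \<sqinter>\<^sub>r y = y \<sqinter>\<^sub>r x)"
    using meetop_commute_on_downset narhoop_if_commute_on_downsets by auto
  have assoc: "narhoop m r \<longleftrightarrow>
      (\<forall>a. \<forall>x\<in>{..a}. \<forall>y\<in>{..a}. \<forall>z\<in>{..a}. (x \<sqinter>\<^sub>r y) \<sqinter>\<^sub>r z = x \<sqinter>\<^sub>r (y \<sqinter>\<^sub>r z))"
    using meetop_assoc_on_downset narhoop_if_assoc_on_downsets by auto
  show ?thesis
    using meetop_le_if_le_left commute assoc by auto
qed

end
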